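(* Let $A$ be a distributive meet-complemented lattice in which $\Box x$ and $\Diamond x$ exist for every $x\in A$ and such that $\Box a\le\Box\Box a$ for all $a\in A$. Then for all $a,b\in A$: (i) $\Box(a\wedge\Diamond b)=\Box a\wedge\Diamond b$; (ii) $\Diamond(a\vee\Box b)=\Diamond a\vee\Box b$; (iii) $\Box(a\vee\Box b)=\Box a\vee\Box b$; (iv) $\Diamond(a\wedge\Diamond b)=\Diamond a\wedge\Diamond b$.
   Context: A meet-complemented lattice is a lattice $(L,\le)$ such that for every $a\in L$ the element $\neg a=\max\{b\in L: a\wedge b\le c\ \text{for all } c\in L\}$ exists; it is bounded with bottom $0$ and top $1$. For $a\in L$, $\Box a=\max\{b\in L: a\vee\neg b=1\}$ and $\Diamond a=\min\{b\in L: \neg a\vee b=1\}$. *)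

theory Defs
  imports Main
begin

definition has_max :: "('a::order \<Rightarrow> bool) \<Rightarrow> bool" where
  "has_max P \<longleftrightarrow> (\<exists>x. P x \<and> (\<forall>y. P y \<longrightarrow> y \<le> x))"

definition has_min :: "('a::order \<Rightarrow> bool) \<Rightarrow> bool" where
  "has_min P \<longleftrightarrow> (\<exists>x. P x \<and> (\<forall>y. P y \<longrightarrow> x \<le> y))"

definition mc_neg :: "'a::bounded_lattice \<Rightarrow> 'a" where
  "mc_neg a = (GREATEST b. \<forall>c. inf a b \<le> c)"

definition mc_box :: "'a::bounded_lattice \<Rightarrow> 'a" where
  "mc_box a = (GREATEST b. sup a (mc_neg b) = top)"

definition mc_dia :: "'a::bounded_lattice \<Rightarrow> 'a" where
  "mc_dia a = (LEAST b. sup (mc_neg a) b = top)"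

end

theory Submission
  imports Defs
begin

text \<open>
  In a distributive meet-complemented lattice the operators \<open>\<Diamond>\<close> and \<open>\<Box>\<close> form a Galois
  connection (\<open>\<Diamond> b \<le> a \<longleftrightarrow> b \<le> \<Box> a\<close>), so \<open>\<Box>\<close> preserves meets and \<open>\<Diamond>\<close> preserves joins.
  Call \<open>c\<close> complemented if \<open>c \<squnion> \<not> c = 1\<close>. For complemented \<open>c\<close> every \<open>a\<close> splits as
  \<open>(a \<sqinter> c) \<squnion> (a \<sqinter> \<not> c)\<close>, and \<open>\<Box>\<close>, \<open>\<Diamond>\<close> fix both \<open>c\<close> and \<open>\<not> c\<close>; this gives
  \<open>\<Box>(a \<squnion> c) = \<Box> a \<squnion> c\<close> and \<open>\<Diamond>(a \<sqinter> c) = \<Diamond> a \<sqinter> c\<close>. The axiom \<open>\<Box> a \<le> \<Box>\<Box> a\<close> says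
  exactly that every \<open>\<Box> a\<close> is complemented, and via the Galois connection that every
  \<open>\<Diamond> a\<close> is complemented too, which yields all four identities.
\<close>

locale meet_complemented_lattice =
  assumes mc_neg_exists: "\<forall>a::'a::{distrib_lattice,bounded_lattice}. has_max (\<lambda>b. \<forall>c. inf a b \<le> c)"
begin

lemma le_mc_neg_iff: "b \<le> mc_neg a \<longleftrightarrow> inf a b = bot" for a b :: 'a
proof -
  obtain x where x: "\<forall>c. inf a x \<le> c" "\<forall>y. (\<forall>c. inf a y \<le> c) \<longrightarrow> y \<le> x"
    using mc_neg_exists unfolding has_max_def by blast
  have "mc_neg a = x"
    unfolding mc_neg_def by (rule Greatest_equality) (use x in auto)
  moreover have "inf a b = bot" if "b \<le> x"
    using x(1) inf_mono[OF order_refl that, of a] by (metis bot_unique)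
  ultimately show ?thesis
    using x(2) by auto
qed

lemma inf_mc_neg: "inf a (mc_neg a) = bot" for a :: 'a
  using le_mc_neg_iff[THEN iffD1, OF order_refl] .

lemma mc_neg_antimono:
  fixes a b :: 'a
  assumes "b \<le> a"
  shows "mc_neg a \<le> mc_neg b"
proof -
  have "inf b (mc_neg a) \<le> inf a (mc_neg a)"
    using assms by (rule inf_mono) simp
  then show ?thesis
    by (simp add: le_mc_neg_iff inf_mc_neg bot_unique)
qed

lemma le_mc_neg_mc_neg: "a \<le> mc_neg (mc_neg a)" for a :: 'a
  unfolding le_mc_neg_iff by (simp add: inf_commute inf_mc_neg)

end

locale modal_mc_lattice = meet_complemented_lattice +
  assumes mc_box_exists: "\<forall>a::'a::{distrib_lattice,bounded_lattice}. has_max (\<lambda>b. sup a (mc_neg b) = top)"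
    and mc_dia_exists: "\<forall>a::'a. has_min (\<lambda>b. sup (mc_neg a) b = top)"
begin

lemma le_mc_box_iff: "b \<le> mc_box a \<longleftrightarrow> sup a (mc_neg b) = top" for a b :: 'a
proof -
  obtain x where x: "sup a (mc_neg x) = top" "\<forall>y. sup a (mc_neg y) = top \<longrightarrow> y \<le> x"
    using mc_box_exists unfolding has_max_def by blast
  have "mc_box a = x"
    unfolding mc_box_def by (rule Greatest_equality) (use x in auto)
  moreover have "sup a (mc_neg b) = top" if "b \<le> x"
    using x(1) sup_mono[OF order_refl mc_neg_antimono[OF that], of a] by (simp add: top_unique)
  ultimately show ?thesis
    using x(2) by auto
qed

lemma mc_dia_le_iff: "mc_dia a \<le> b \<longleftrightarrow> sup (mc_neg a) b = top" for a b :: 'a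
proof -
  obtain x where x: "sup (mc_neg a) x = top" "\<forall>y. sup (mc_neg a) y = top \<longrightarrow> x \<le> y"
    using mc_dia_exists unfolding has_min_def by blast
  have "mc_dia a = x"
    unfolding mc_dia_def by (rule Least_equality) (use x in auto)
  moreover have "sup (mc_neg a) b = top" if "x \<le> b"
    using x(1) sup_mono[OF order_refl that, of "mc_neg a"] by (simp add: top_unique)
  ultimately show ?thesis
    using x(2) by auto
qed

lemma mc_dia_le_iff_le_mc_box: "mc_dia b \<le> a \<longleftrightarrow> b \<le> mc_box a" for a b :: 'a
  by (simp add: le_mc_box_iff mc_dia_le_iff sup_commute)

lemma mc_box_le: "mc_box a \<le> a" for a :: 'a
proof -
  have "sup a (mc_neg (mc_box a)) = top"
    using le_mc_box_iff by blast
  then have "mc_box a = inf (mc_box a) (sup a (mc_neg (mc_box a)))"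
    by simp
  also have "\<dots> = inf (mc_box a) a"
    by (simp add: inf_sup_distrib1 inf_mc_neg)
  finally show ?thesis
    by (rule inf.orderI)
qed

lemma le_mc_dia: "a \<le> mc_dia a" for a :: 'a
  using mc_dia_le_iff_le_mc_box[of a "mc_dia a"] mc_box_le[of "mc_dia a"] by auto

lemma mc_box_mono: "a \<le> b \<Longrightarrow> mc_box a \<le> mc_box b" for a b :: 'a
  by (metis mc_dia_le_iff_le_mc_box order_refl order_trans)

lemma mc_dia_mono: "a \<le> b \<Longrightarrow> mc_dia a \<le> mc_dia b" for a b :: 'a
  by (metis mc_dia_le_iff_le_mc_box order_refl order_trans)

lemma mc_box_inf: "mc_box (inf a b) = inf (mc_box a) (mc_box b)" for a b :: 'a
proof (rule order.antisym)
  show "mc_box (inf a b) \<le> inf (mc_box a) (mc_box b)"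
    using mc_box_mono[of "inf a b" a] mc_box_mono[of "inf a b" b] by simp
  have "mc_dia (inf (mc_box a) (mc_box b)) \<le> inf a b"
    using mc_dia_le_iff_le_mc_box[of "inf (mc_box a) (mc_box b)"] by simp
  then show "inf (mc_box a) (mc_box b) \<le> mc_box (inf a b)"
    by (rule mc_dia_le_iff_le_mc_box[THEN iffD1])
qed

lemma mc_dia_sup: "mc_dia (sup a b) = sup (mc_dia a) (mc_dia b)" for a b :: 'a
proof (rule order.antisym)
  have "sup a b \<le> mc_box (sup (mc_dia a) (mc_dia b))"
    using mc_dia_le_iff_le_mc_box[of a "sup (mc_dia a) (mc_dia b)", symmetric]
      mc_dia_le_iff_le_mc_box[of b "sup (mc_dia a) (mc_dia b)", symmetric]
    by simp
  then show "mc_dia (sup a b) \<le> sup (mc_dia a) (mc_dia b)"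
    by (rule mc_dia_le_iff_le_mc_box[THEN iffD2])
  show "sup (mc_dia a) (mc_dia b) \<le> mc_dia (sup a b)"
    using mc_dia_mono[of a "sup a b"] mc_dia_mono[of b "sup a b"] by simp
qed

definition complemented :: "'a \<Rightarrow> bool" where
  "complemented c \<longleftrightarrow> sup c (mc_neg c) = top"

lemma complemented_mc_neg: "complemented c \<Longrightarrow> complemented (mc_neg c)" for c :: 'a
  unfolding complemented_def
  using sup_mono[OF order_refl le_mc_neg_mc_neg, of "mc_neg c" c]
  by (simp add: sup_commute top_unique)

lemma mc_box_complemented: "complemented c \<Longrightarrow> mc_box c = c" for c :: 'a
  unfolding complemented_def using le_mc_box_iff[of c c] mc_box_le[of c] by (simp add: order.antisym)

lemma mc_dia_complemented: "complemented c \<Longrightarrow> mc_dia c = c" for c :: 'a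
  unfolding complemented_def using mc_dia_le_iff[of c c] le_mc_dia[of c]
  by (simp add: order.antisym sup_commute)

lemma mc_box_sup_complemented:
  fixes a c :: 'a
  assumes "complemented c"
  shows "mc_box (sup a c) = sup (mc_box a) c"
proof (rule order.antisym)
  have "mc_box (sup a c) = inf (mc_box (sup a c)) (sup c (mc_neg c))"
    using assms unfolding complemented_def by simp
  also have "\<dots> \<le> sup c (inf (mc_box (sup a c)) (mc_box (mc_neg c)))"
    using mc_box_complemented[OF complemented_mc_neg[OF assms]]
    by (simp add: inf_sup_distrib1 le_supI1 le_supI2)
  also have "\<dots> = sup c (mc_box (inf a (mc_neg c)))"
    by (simp only: mc_box_inf[symmetric] inf_sup_distrib2 inf_mc_neg sup_bot_right)
  also have "\<dots> \<le> sup (mc_box a) c"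
    using mc_box_mono[of "inf a (mc_neg c)" a] by (simp add: le_supI1 le_supI2 sup_commute)
  finally show "mc_box (sup a c) \<le> sup (mc_box a) c" .
  show "sup (mc_box a) c \<le> mc_box (sup a c)"
    using mc_box_mono[of a "sup a c"] mc_box_mono[of c "sup a c"] mc_box_complemented[OF assms]
    by simp
qed

lemma mc_dia_inf_complemented:
  fixes a c :: 'a
  assumes "complemented c"
  shows "mc_dia (inf a c) = inf (mc_dia a) c"
proof (rule order.antisym)
  show "mc_dia (inf a c) \<le> inf (mc_dia a) c"
    using mc_dia_mono[of "inf a c" a] mc_dia_mono[of "inf a c" c] mc_dia_complemented[OF assms]
    by simp
  have "mc_dia a = mc_dia (sup (inf a c) (inf a (mc_neg c)))"
    using assms unfolding complemented_def by (metis inf_sup_distrib1 inf_top_right)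
  also have "\<dots> \<le> sup (mc_dia (inf a c)) (mc_neg c)"
    using mc_dia_mono[of "inf a (mc_neg c)" "mc_neg c"]
      mc_dia_complemented[OF complemented_mc_neg[OF assms]]
    by (simp add: mc_dia_sup le_supI2)
  finally have "inf (mc_dia a) c \<le> inf (sup (mc_dia (inf a c)) (mc_neg c)) c"
    by (simp add: le_infI1)
  also have "\<dots> = inf (mc_dia (inf a c)) c"
    by (simp only: inf_sup_distrib2 inf_commute[of "mc_neg c" c] inf_mc_neg sup_bot_right)
  also have "\<dots> \<le> mc_dia (inf a c)"
    by simp
  finally show "inf (mc_dia a) c \<le> mc_dia (inf a c)" .
qed

end

locale s4_mc_lattice = modal_mc_lattice +
  assumes mc_box_le_mc_box_mc_box: "\<forall>a::'a::{distrib_lattice,bounded_lattice}. mc_box a \<le> mc_box (mc_box a)"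
begin

lemma complemented_mc_box: "complemented (mc_box a)" for a :: 'a
  using mc_box_le_mc_box_mc_box le_mc_box_iff unfolding complemented_def by blast

lemma complemented_mc_dia: "complemented (mc_dia a)" for a :: 'a
proof -
  have "a \<le> mc_box (mc_dia a)"
    using mc_dia_le_iff_le_mc_box[of a "mc_dia a"] by simp
  then have "a \<le> mc_box (mc_box (mc_dia a))"
    by (simp add: mc_box_complemented complemented_mc_box)
  then have "mc_dia a \<le> mc_box (mc_dia a)"
    by (rule mc_dia_le_iff_le_mc_box[THEN iffD2])
  then have "mc_dia (mc_dia a) \<le> mc_dia a"
    by (rule mc_dia_le_iff_le_mc_box[THEN iffD2])
  then show ?thesis
    unfolding complemented_def mc_dia_le_iff by (simp add: sup_commute)
qed

end

theorem proposition24: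
  assumes mc: "\<forall>a::'a::{distrib_lattice,bounded_lattice}. has_max (\<lambda>b. \<forall>c. inf a b \<le> c)"
    and box_ex: "\<forall>a::'a. has_max (\<lambda>b. sup a (mc_neg b) = top)"
    and dia_ex: "\<forall>a::'a. has_min (\<lambda>b. sup (mc_neg a) b = top)"
    and S4: "\<forall>a::'a. mc_box a \<le> mc_box (mc_box a)"
  shows "(\<forall>a b::'a. mc_box (inf a (mc_dia b)) = inf (mc_box a) (mc_dia b))
       \<and> (\<forall>a b::'a. mc_dia (sup a (mc_box b)) = sup (mc_dia a) (mc_box b))
       \<and> (\<forall>a b::'a. mc_box (sup a (mc_box b)) = sup (mc_box a) (mc_box b))
       \<and> (\<forall>a b::'a. mc_dia (inf a (mc_dia b)) = inf (mc_dia a) (mc_dia b))"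
proof -
  interpret s4_mc_lattice
    using assms by unfold_locales
  show ?thesis
    using mc_box_inf mc_dia_sup mc_box_sup_complemented[OF complemented_mc_box]
      mc_dia_inf_complemented[OF complemented_mc_dia]
      mc_box_complemented[OF complemented_mc_dia] mc_dia_complemented[OF complemented_mc_box]
    by simp
qed

end
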